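(* Let $\mathbf{Ring}$ be the category of (commutative) unital rings, $\mathbf{Digraph}$ the category of digraphs with regular morphisms, and $\mathbf{Ab}^{\mathrm{gr}}$ the category of graded abelian groups. Then multipath cohomology with constant coefficients \[\mathrm{H}_\mu(-;-)\colon \mathbf{Digraph}^{\mathrm{op}}\times\mathbf{Ring}\to\mathbf{Ab}^{\mathrm{gr}},\qquad({\tt G},R)\mapsto \mathrm{H}^*_\mu({\tt G};R)=\mathrm{H}^*_\mu({\tt G};R,R),\] is a bifunctor.
   Context: A digraph ${\tt G}=(V,E)$ has a finite vertex set $V$ and edge set $E\subseteq (V\times V)\setminus\{(v,v)\}$; a regular morphism is an injective vertex map sending edges to edges. A multipath of ${\tt G}$ is a spanning subgraph (all vertices, a subset of the edges) each of whose connected components (of the underlying undirected graph) is a single vertex or a simple directed path (edges $e_1,\dots,e_k$ with target of $e_i$ equal to source of $e_{i+1}$, no repeated vertex, not a cycle). $P({\tt G})$ is the set of multipaths ordered by inclusion of edge sets; ${\tt H}\prec{\tt H}'$ iff ${\tt H}'$ is obtained from ${\tt H}$ by adding one edge. With constant coefficients $A=M=R$, each multipath contributes $\mathcal F({\tt H})=R^{\otimes(\#\text{components})}\cong R$, and covering maps are multiplications (identity under these identifications). Fix a total order on the vertices; order components of a multipath by minimal vertex; for ${\tt H}\prec{\tt H}\cup e$ let $s,t$ be the indices of the components containing the source and target of $e$, and let $\sigma({\tt H},{\tt H}\cup e)=t+1$ if $t>s$ and $s$ if $s>t$ (mod 2). Then $C^n_\mu({\tt G};R)=\bigoplus_{{\tt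 H}\in P({\tt G}),\#E({\tt H})=n}\mathcal F({\tt H})$ with $d=\sum_{{\tt H}\prec{\tt H}'}(-1)^{\sigma({\tt H},{\tt H}')}\mathcal F({\tt H}\prec{\tt H}')$, and $\mathrm{H}^*_\mu({\tt G};R)$ is its cohomology. A ring homomorphism $f\colon R\to S$ acts via extension of scalars $S\otimes_R(-)$, using $S\otimes_R R^{\otimes k}\cong S$; a regular morphism $\phi\colon{\tt G}'\to{\tt G}$ acts through the cochain map projecting $C_\mu({\tt G};R)$ onto summands indexed by multipaths in the image of $P({\tt G}')$ (edges $\phi(E({\tt H}))$), identified with the summands of $C_\mu({\tt G}';R)$. *)

theory Defs
  imports "HOL-Algebra.Algebra" "HOL-Library.Product_Lexorder"
begin

definition digraph :: "'v set \<Rightarrow> ('v \<times> 'v) set \<Rightarrow> bool" where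
  "digraph V E \<longleftrightarrow> finite V \<and> E \<subseteq> V \<times> V \<and> (\<forall>v. (v, v) \<notin> E)"

definition regular_morphism ::
  "'w set \<Rightarrow> ('w \<times> 'w) set \<Rightarrow> 'v set \<Rightarrow> ('v \<times> 'v) set \<Rightarrow> ('w \<Rightarrow> 'v) \<Rightarrow> bool" where
  "regular_morphism V' E' V E \<phi> \<longleftrightarrow>
     inj_on \<phi> V' \<and> \<phi> ` V' \<subseteq> V \<and> (\<forall>(a, b) \<in> E'. (\<phi> a, \<phi> b) \<in> E)"

definition ring_homomorphism :: "('r::comm_ring_1 \<Rightarrow> 's::comm_ring_1) \<Rightarrow> bool" where
  "ring_homomorphism f \<longleftrightarrow> f 1 = 1 \<and> (\<forall>x y. f (x + y) = f x + f y) \<and> (\<forall>x y. f (x * y) = f x * f y)"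

definition comp_of :: "'v set \<Rightarrow> ('v \<times> 'v) set \<Rightarrow> 'v \<Rightarrow> 'v set" where
  "comp_of V H v = {w \<in> V. (v, w) \<in> (H \<union> H\<inverse>)\<^sup>*}"

definition comps :: "'v set \<Rightarrow> ('v \<times> 'v) set \<Rightarrow> 'v set set" where
  "comps V H = comp_of V H ` V"

definition is_dipath :: "'v set \<Rightarrow> ('v \<times> 'v) set \<Rightarrow> bool" where
  "is_dipath C F \<longleftrightarrow> (\<exists>vs. distinct vs \<and> set vs = C \<and> F = set (zip vs (tl vs)))"

definition multipaths :: "'v set \<Rightarrow> ('v \<times> 'v) set \<Rightarrow> ('v \<times> 'v) set set" where
  "multipaths V E = {H. H \<subseteq> E \<and> (\<forall>C \<in> comps V H. is_dipath C (H \<inter> (C \<times> C)))}"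

definition multipaths_n :: "'v set \<Rightarrow> ('v \<times> 'v) set \<Rightarrow> nat \<Rightarrow> ('v \<times> 'v) set set" where
  "multipaths_n V E n = {H \<in> multipaths V E. card H = n}"

text \<open>Index (starting at 1) of the component containing v, components ordered by
  their minimal vertex.\<close>
definition comp_index :: "'v::linorder set \<Rightarrow> ('v \<times> 'v) set \<Rightarrow> 'v \<Rightarrow> nat" where
  "comp_index V H v = card {D \<in> comps V H. Min D < Min (comp_of V H v)} + 1"

definition sigma :: "'v::linorder set \<Rightarrow> ('v \<times> 'v) set \<Rightarrow> ('v \<times> 'v) \<Rightarrow> nat" where
  "sigma V H e = (let s = comp_index V H (fst e); t = comp_index V H (snd e)
                  in if t > s then t + 1 else s)"

text \<open>The sign (-1)^sigma(H, H \<union> {e}).\<close>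
definition eps :: "'v::linorder set \<Rightarrow> ('v \<times> 'v) set \<Rightarrow> ('v \<times> 'v) \<Rightarrow> int" where
  "eps V H e = (-1) ^ sigma V H e"

text \<open>C^n: an element of the direct sum of copies of R indexed by multipaths with n
  edges is a function on edge sets supported on those multipaths.\<close>
definition cochains :: "'v set \<Rightarrow> ('v \<times> 'v) set \<Rightarrow> nat \<Rightarrow> (('v \<times> 'v) set \<Rightarrow> 'r::comm_ring_1) set" where
  "cochains V E n = {c. \<forall>H. c H \<noteq> 0 \<longrightarrow> H \<in> multipaths_n V E n}"

definition cochain_grp :: "'v set \<Rightarrow> ('v \<times> 'v) set \<Rightarrow> nat \<Rightarrow> (('v \<times> 'v) set \<Rightarrow> 'r::comm_ring_1) monoid" where
  "cochain_grp V E n = \<lparr>carrier = cochains V E n, monoid.mult = (\<lambda>x y H. x H + y H), monoid.one = (\<lambda>_. 0)\<rparr>"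

definition dmap :: "'v::linorder set \<Rightarrow> ('v \<times> 'v) set \<Rightarrow> nat \<Rightarrow>
    (('v \<times> 'v) set \<Rightarrow> 'r::comm_ring_1) \<Rightarrow> (('v \<times> 'v) set \<Rightarrow> 'r)" where
  "dmap V E n c = (\<lambda>H'. if H' \<in> multipaths_n V E (Suc n)
      then (\<Sum>e\<in>H'. of_int (eps V (H' - {e}) e) * c (H' - {e})) else 0)"

definition cocycles :: "'v::linorder set \<Rightarrow> ('v \<times> 'v) set \<Rightarrow> nat \<Rightarrow> (('v \<times> 'v) set \<Rightarrow> 'r::comm_ring_1) set" where
  "cocycles V E n = {c \<in> cochains V E n. dmap V E n c = (\<lambda>_. 0)}"

fun coboundaries :: "'v::linorder set \<Rightarrow> ('v \<times> 'v) set \<Rightarrow> nat \<Rightarrow> (('v \<times> 'v) set \<Rightarrow> 'r::comm_ring_1) set" where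
  "coboundaries V E 0 = {\<lambda>_. 0}"
| "coboundaries V E (Suc n) = dmap V E n ` cochains V E n"

definition mp_cohom :: "'v::linorder set \<Rightarrow> ('v \<times> 'v) set \<Rightarrow> nat \<Rightarrow> (('v \<times> 'v) set \<Rightarrow> 'r::comm_ring_1) set monoid" where
  "mp_cohom V E n = ((cochain_grp V E n)\<lparr>carrier := cocycles V E n\<rparr>) Mod (coboundaries V E n)"

text \<open>Canonical gauge (normalised at the empty multipath) comparing the sign
  assignment of G restricted along phi with the sign assignment of G'; computed along
  the chain adding the edges of H' in increasing order.\<close>
definition gauge :: "'v::linorder set \<Rightarrow> 'w::linorder set \<Rightarrow> ('w \<Rightarrow> 'v) \<Rightarrow> ('w \<times> 'w) set \<Rightarrow> int" where
  "gauge V V' \<phi> H' = (let es = sorted_list_of_set H' in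
     \<Prod>i<length es. eps V (map_prod \<phi> \<phi> ` set (take i es)) (map_prod \<phi> \<phi> (es ! i))
                   * eps V' (set (take i es)) (es ! i))"

text \<open>Cochain map C(G;R) -> C(G';S) induced by phi : G' -> G and f : R -> S:
  extension of scalars followed by projection onto the summands indexed by images of
  multipaths of G', identified with those of G' (up to the canonical gauge).\<close>
definition pull :: "'v::linorder set \<Rightarrow> 'w::linorder set \<Rightarrow> ('w \<times> 'w) set \<Rightarrow> nat \<Rightarrow>
    ('w \<Rightarrow> 'v) \<Rightarrow> ('r::comm_ring_1 \<Rightarrow> 's::comm_ring_1) \<Rightarrow>
    (('v \<times> 'v) set \<Rightarrow> 'r) \<Rightarrow> (('w \<times> 'w) set \<Rightarrow> 's)" where
  "pull V V' E' n \<phi> f c = (\<lambda>H'. if H' \<in> multipaths_n V' E' n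
      then of_int (gauge V V' \<phi> H') * f (c (map_prod \<phi> \<phi> ` H')) else 0)"

definition cohom_map :: "'v::linorder set \<Rightarrow> 'w::linorder set \<Rightarrow> ('w \<times> 'w) set \<Rightarrow> nat \<Rightarrow>
    ('w \<Rightarrow> 'v) \<Rightarrow> ('r::comm_ring_1 \<Rightarrow> 's::comm_ring_1) \<Rightarrow>
    (('v \<times> 'v) set \<Rightarrow> 'r) set \<Rightarrow> (('w \<times> 'w) set \<Rightarrow> 's) set" where
  "cohom_map V V' E' n \<phi> f cl =
     Union ((\<lambda>x. coboundaries V' E' n #>\<^bsub>cochain_grp V' E' n\<^esub> pull V V' E' n \<phi> f x) ` cl)"

end

theory Submission
  imports Defs
begin

text \<open>
  A regular morphism \<phi> : G' \<rightarrow> G identifies the multipaths of G' with the multipaths of G whose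
  edges lie in its image, compatibly with the differential up to sign.  The sign conventions of G
  and G' are compared by a gauge: the product, along a maximal chain of submultipaths of H, of the
  ratios of the two signs.  Adding the two edges of a square in either order gives opposite signs in
  both graphs: a multipath is a forest, so each sign is determined by the ranks of the minima of the
  two components being joined, and a case analysis on their order settles the square.  Hence the
  ratios commute around squares, the gauge does not depend on the chain, and pulling back along \<phi>,
  multiplying by the gauge and applying f coefficientwise is a cochain map.  These cochain maps
  compose strictly, so the induced maps on cocycles modulo coboundaries are functorial in both
  arguments.
\<close>

section \<open>Connected components of spanning subgraphs\<close>

abbreviation undirected :: "('v \<times> 'v) set \<Rightarrow> ('v \<times> 'v) set" where
  "undirected H \<equiv> H \<union> H\<inverse>"

lemma undirected_rtrancl_sym:
  "(x, y) \<in> (undirected H)\<^sup>* \<Longrightarrow> (y, x) \<in> (undirected H)\<^sup>*"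
  using sym_rtrancl[OF sym_Un_converse, of H] by (rule symD)

lemma undirected_rtrancl_insert:
  "(v, w) \<in> (undirected (insert (a, b) H))\<^sup>* \<longleftrightarrow>
     (v, w) \<in> (undirected H)\<^sup>* \<or>
     (v, a) \<in> (undirected H)\<^sup>* \<and> (b, w) \<in> (undirected H)\<^sup>* \<or>
     (v, b) \<in> (undirected H)\<^sup>* \<and> (a, w) \<in> (undirected H)\<^sup>*"
proof -
  have "undirected (insert (a, b) H) = insert (a, b) (insert (b, a) (undirected H))"
    by auto
  then show ?thesis
    by (auto simp: rtrancl_insert intro: rtrancl_trans)
qed

lemma mem_comp_of: "w \<in> comp_of V H v \<longleftrightarrow> w \<in> V \<and> (v, w) \<in> (undirected H)\<^sup>*"
  by (simp add: comp_of_def)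

lemma comp_of_self: "v \<in> V \<Longrightarrow> v \<in> comp_of V H v"
  by (simp add: comp_of_def)

lemma comp_of_subset: "comp_of V H v \<subseteq> V"
  by (auto simp: comp_of_def)

lemma comp_of_eq_iff:
  assumes "v \<in> V" "w \<in> V"
  shows "comp_of V H v = comp_of V H w \<longleftrightarrow> (v, w) \<in> (undirected H)\<^sup>*"
  using assms undirected_rtrancl_sym[of v w H] unfolding comp_of_def
  by (blast intro: rtrancl_trans)

lemma comp_of_insert:
  "comp_of V (insert (a, b) H) v =
     (if (v, a) \<in> (undirected H)\<^sup>* \<or> (v, b) \<in> (undirected H)\<^sup>*
      then comp_of V H a \<union> comp_of V H b else comp_of V H v)"
  unfolding comp_of_def undirected_rtrancl_insert
  by (auto dest: undirected_rtrancl_sym intro: rtrancl_trans)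

lemma comps_disjoint:
  assumes "C \<in> comps V H" "D \<in> comps V H" "C \<noteq> D"
  shows "C \<inter> D = {}"
proof (rule ccontr)
  assume "C \<inter> D \<noteq> {}"
  then obtain x where x: "x \<in> C" "x \<in> D"
    by blast
  obtain c d where cd: "c \<in> V" "d \<in> V" "C = comp_of V H c" "D = comp_of V H d"
    using assms(1,2) unfolding comps_def by blast
  then have "(c, x) \<in> (undirected H)\<^sup>*" "(d, x) \<in> (undirected H)\<^sup>*"
    using x by (auto simp: mem_comp_of)
  then have "(c, d) \<in> (undirected H)\<^sup>*"
    by (meson rtrancl_trans undirected_rtrancl_sym)
  then show False
    using assms(3) cd comp_of_eq_iff[of c V d H] by simp
qed

lemma Union_comps: "\<Union>(comps V H) = V"
proof
  show "\<Union>(comps V H) \<subseteq> V"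
    unfolding comps_def using comp_of_subset[of V H] by blast
  show "V \<subseteq> \<Union>(comps V H)"
    unfolding comps_def using comp_of_self[of _ V H] by blast
qed

definition merge_min :: "'a::linorder \<Rightarrow> 'a \<Rightarrow> 'a \<Rightarrow> 'a" where
  "merge_min x y t = (if t = x \<or> t = y then min x y else t)"

lemma merge_min_same [simp]: "merge_min x x t = t"
  by (simp add: merge_min_def)

lemma merge_min_image:
  assumes "x \<in> M" "y \<in> M" "x \<noteq> y"
  shows "merge_min x y ` M = M - {max x y}"
  using assms by (auto simp: merge_min_def min_def max_def image_iff)

definition comp_min :: "'v::linorder set \<Rightarrow> ('v \<times> 'v) set \<Rightarrow> 'v \<Rightarrow> 'v" where
  "comp_min V H v = Min (comp_of V H v)"

lemma comp_min_mem:
  assumes "finite V" "v \<in> V"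
  shows "comp_min V H v \<in> comp_of V H v"
  unfolding comp_min_def
  using assms comp_of_self[OF assms(2), of H] finite_subset[OF comp_of_subset] by (intro Min_in) auto

lemma comp_min_eq_iff:
  assumes "finite V" "v \<in> V" "w \<in> V"
  shows "comp_min V H v = comp_min V H w \<longleftrightarrow> (v, w) \<in> (undirected H)\<^sup>*"
proof
  assume "comp_min V H v = comp_min V H w"
  then have "(v, comp_min V H v) \<in> (undirected H)\<^sup>*" "(w, comp_min V H v) \<in> (undirected H)\<^sup>*"
    using comp_min_mem[OF assms(1,2), of H] comp_min_mem[OF assms(1,3), of H] by (auto simp: mem_comp_of)
  then show "(v, w) \<in> (undirected H)\<^sup>*"
    by (blast dest: undirected_rtrancl_sym intro: rtrancl_trans)
qed (use assms comp_of_eq_iff[of v V w H] in \<open>simp add: comp_min_def\<close>)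

lemma comp_min_insert:
  assumes "finite V" "a \<in> V" "b \<in> V" "v \<in> V"
  shows "comp_min V (insert (a, b) H) v =
    merge_min (comp_min V H a) (comp_min V H b) (comp_min V H v)"
proof -
  have "finite (comp_of V H u)" "comp_of V H u \<noteq> {}" if "u \<in> V" for u
    using assms(1) comp_of_self[OF that, of H] finite_subset[OF comp_of_subset] by auto
  then have "Min (comp_of V H a \<union> comp_of V H b) = min (comp_min V H a) (comp_min V H b)"
    unfolding comp_min_def using assms(2,3) by (simp add: Min_Un)
  then show ?thesis
    using comp_min_eq_iff[OF assms(1,4,2), of H] comp_min_eq_iff[OF assms(1,4,3), of H]
    unfolding merge_min_def comp_min_def[of V "insert (a, b) H"] comp_of_insert
    by (auto simp: comp_min_def)
qed

lemma comp_min_image_insert: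
  assumes "finite V" "a \<in> V" "b \<in> V" "(a, b) \<notin> (undirected H)\<^sup>*"
  shows "comp_min V (insert (a, b) H) ` V =
    comp_min V H ` V - {max (comp_min V H a) (comp_min V H b)}"
proof -
  have "comp_min V (insert (a, b) H) ` V = merge_min (comp_min V H a) (comp_min V H b) ` comp_min V H ` V"
    using comp_min_insert[OF assms(1-3)] by (simp add: image_image cong: image_cong)
  then show ?thesis
    using assms comp_min_eq_iff[OF assms(1-3)] by (simp add: merge_min_image)
qed

lemma inj_on_Min_comps:
  assumes "finite V"
  shows "inj_on Min (comps V H)"
proof
  fix C D assume "C \<in> comps V H" "D \<in> comps V H" "Min C = Min D"
  then obtain c d where "c \<in> V" "d \<in> V" "C = comp_of V H c" "D = comp_of V H d"
    "comp_min V H c = comp_min V H d"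
    unfolding comps_def comp_min_def by auto
  then show "C = D"
    using assms comp_min_eq_iff comp_of_eq_iff by metis
qed

lemma card_comps:
  fixes V :: "'v::linorder set"
  shows "finite V \<Longrightarrow> card (comps V H) = card (comp_min V H ` V)"
  using card_image[OF inj_on_Min_comps, of V H] by (simp add: comps_def comp_min_def image_image)

lemma card_comps_insert:
  fixes V :: "'v::linorder set"
  assumes "finite V" "a \<in> V" "b \<in> V"
  shows "card (comps V (insert (a, b) H)) + (if (a, b) \<in> (undirected H)\<^sup>* then 0 else 1)
    = card (comps V H)"
proof (cases "(a, b) \<in> (undirected H)\<^sup>*")
  case True
  then have "comp_min V (insert (a, b) H) ` V = comp_min V H ` V"
    using comp_min_insert[OF assms] comp_min_eq_iff[OF assms, of H] by simp
  then show ?thesis using True assms(1) by (simp add: card_comps)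
next
  case False
  have max_mem: "max (comp_min V H a) (comp_min V H b) \<in> comp_min V H ` V"
    using assms(2,3) by (simp add: max_def)
  have "card (comp_min V H ` V - {max (comp_min V H a) (comp_min V H b)}) + 1
      = card (comp_min V H ` V)"
    using card_Suc_Diff1[OF finite_imageI[OF assms(1)] max_mem] by (simp only: Suc_eq_plus1)
  then show ?thesis
    using False assms(1) comp_min_image_insert[OF assms False] by (simp add: card_comps)
qed

section \<open>Forests\<close>

(* Acyclicity of the underlying undirected graph, expressed through the Euler characteristic. *)
definition forest :: "'v set \<Rightarrow> ('v \<times> 'v) set \<Rightarrow> bool" where
  "forest V H \<longleftrightarrow> card H + card (comps V H) = card V"

lemma comps_empty: "comps V {} = (\<lambda>v. {v}) ` V"
  unfolding comps_def comp_of_def by auto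

lemma card_add_card_comps_insert_mono:
  fixes V :: "'v::linorder set"
  assumes "finite V" "finite H" "e \<in> V \<times> V"
  shows "card H + card (comps V H) \<le> card (insert e H) + card (comps V (insert e H))"
proof (cases "e \<in> H")
  case False
  obtain a b where "e = (a, b)" by fastforce
  then show ?thesis
    using card_comps_insert[OF assms(1), of a b H] assms False by (auto split: if_splits)
qed (simp add: insert_absorb)

lemma card_add_card_comps_mono:
  fixes V :: "'v::linorder set"
  assumes "finite V" "H \<subseteq> V \<times> V" "K \<subseteq> H"
  shows "card K + card (comps V K) \<le> card H + card (comps V H)"
proof -
  have fin: "finite H" "finite K"
    using assms finite_subset[of _ "V \<times> V"] by auto
  have extend: "card K + card (comps V K) \<le> card (K \<union> D) + card (comps V (K \<union> D))"
    if "finite D" "D \<subseteq> V \<times> V" for D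
    using that
  proof (induction D rule: finite_induct)
    case (insert e D)
    then show ?case
      using card_add_card_comps_insert_mono[OF assms(1), of "K \<union> D" e] fin by simp
  qed simp
  have "K \<union> (H - K) = H" "H - K \<subseteq> V \<times> V"
    using assms(2,3) by blast+
  then show ?thesis
    using extend[of "H - K"] fin by simp
qed

lemma card_le_card_add_card_comps:
  fixes V :: "'v::linorder set"
  assumes "finite V" "H \<subseteq> V \<times> V"
  shows "card V \<le> card H + card (comps V H)"
  using card_add_card_comps_mono[OF assms empty_subsetI] by (simp add: comps_empty card_image)

lemma forest_subset:
  fixes V :: "'v::linorder set"
  assumes "finite V" "H \<subseteq> V \<times> V" "forest V H" "K \<subseteq> H"
  shows "forest V K"
proof -
  have "K \<subseteq> V \<times> V"
    using assms(2,4) by blast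
  then show ?thesis
    using card_add_card_comps_mono[OF assms(1,2,4)] card_le_card_add_card_comps[OF assms(1), of K] assms(3)
    unfolding forest_def by linarith
qed

lemma forest_insert_not_connected:
  fixes V :: "'v::linorder set"
  assumes "finite V" "insert (a, b) K \<subseteq> V \<times> V" "(a, b) \<notin> K" "forest V (insert (a, b) K)"
  shows "(a, b) \<notin> (undirected K)\<^sup>*"
proof
  assume "(a, b) \<in> (undirected K)\<^sup>*"
  then have "card (comps V (insert (a, b) K)) = card (comps V K)"
    using card_comps_insert[OF assms(1), of a b K] assms(2) by simp
  moreover have "card (insert (a, b) K) = card K + 1"
    using assms(1-3) finite_subset[of K "V \<times> V"] by simp
  ultimately show False
    using assms(4) card_le_card_add_card_comps[OF assms(1), of K] assms(2)
    unfolding forest_def by simp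
qed

lemma is_dipath_card:
  assumes "is_dipath C F" "C \<noteq> {}"
  shows "card F + 1 = card C"
proof -
  obtain vs where vs: "distinct vs" "set vs = C" "F = set (zip vs (tl vs))"
    using assms(1) unfolding is_dipath_def by blast
  have "card F = length vs - 1"
    using vs(3) distinct_card[OF distinct_zipI1[OF vs(1), of "tl vs"]] by simp
  moreover have "card C = length vs"
    using vs distinct_card by metis
  ultimately show ?thesis
    using vs(2) assms(2) by (cases vs) auto
qed

lemma multipaths_subset: "H \<in> multipaths V E \<Longrightarrow> H \<subseteq> E"
  unfolding multipaths_def by blast

lemma multipath_subset_square: "digraph V E \<Longrightarrow> H \<in> multipaths V E \<Longrightarrow> H \<subseteq> V \<times> V"
  unfolding digraph_def using multipaths_subset by blast

lemma multipath_finite: "digraph V E \<Longrightarrow> H \<in> multipaths V E \<Longrightarrow> finite H"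
  using multipath_subset_square[of V E H] finite_subset[of H "V \<times> V"] by (simp add: digraph_def)

lemma multipath_forest:
  assumes "finite V" "E \<subseteq> V \<times> V" "H \<in> multipaths V E"
  shows "forest V H"
proof -
  have HV: "H \<subseteq> V \<times> V" and dipath: "\<And>C. C \<in> comps V H \<Longrightarrow> is_dipath C (Restr H C)"
    using assms(2,3) unfolding multipaths_def by auto
  have finite: "finite (comps V H)" "finite H" "\<And>C. C \<in> comps V H \<Longrightarrow> finite C"
    using assms(1) finite_subset[OF HV] finite_subset[OF comp_of_subset] by (auto simp: comps_def)
  have H_eq: "H = (\<Union>C\<in>comps V H. Restr H C)"
  proof (intro equalityI subsetI)
    fix e assume "e \<in> H"
    moreover obtain x y where "e = (x, y)"
      by fastforce
    ultimately have "e \<in> Restr H (comp_of V H x)" "comp_of V H x \<in> comps V H"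
      using HV by (auto simp: mem_comp_of comps_def)
    then show "e \<in> (\<Union>C\<in>comps V H. Restr H C)"
      by blast
  qed blast
  have "card (\<Union>C\<in>comps V H. Restr H C) = (\<Sum>C\<in>comps V H. card (Restr H C))"
  proof (rule card_UN_disjoint)
    show "\<forall>C\<in>comps V H. \<forall>D\<in>comps V H. C \<noteq> D \<longrightarrow> Restr H C \<inter> Restr H D = {}"
      using comps_disjoint[of _ V H] by blast
  qed (use finite in auto)
  then have "card H = (\<Sum>C\<in>comps V H. card (Restr H C))"
    by (simp only: H_eq[symmetric])
  moreover have "card V = (\<Sum>C\<in>comps V H. card C)"
    using card_Union_disjoint[of "comps V H"] finite comps_disjoint[of _ V H] Union_comps[of V H]
    unfolding pairwise_def disjnt_def by simp
  moreover have "(\<Sum>C\<in>comps V H. card (Restr H C) + 1) = (\<Sum>C\<in>comps V H. card C)"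
  proof (rule sum.cong)
    fix C assume "C \<in> comps V H"
    then show "card (Restr H C) + 1 = card C"
      using is_dipath_card[OF dipath] comp_of_self[of _ V H] by (auto simp: comps_def)
  qed simp
  ultimately show ?thesis
    unfolding forest_def by (simp add: sum_Suc)
qed

section \<open>Signs\<close>

definition rank :: "'a::linorder set \<Rightarrow> 'a \<Rightarrow> nat" where
  "rank M t = card {m \<in> M. m < t}"

(* With M the set of component minima, (-1) ^ merge_exp M x y is the sign of an edge from the
   component with minimum x to the one with minimum y (eps_eq_merge_exp): sigma has the parity of
   the rank of max x y, plus one if y < x.  Merging replaces both minima by min x y (merge_min) and
   removes max x y from M. *)
definition merge_exp :: "'a::linorder set \<Rightarrow> 'a \<Rightarrow> 'a \<Rightarrow> nat" where
  "merge_exp M x y = rank M (max x y) + (if y < x then 1 else 0)"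

lemma rank_less:
  assumes "finite M" "x \<in> M" "x < y"
  shows "rank M x < rank M y"
  unfolding rank_def using assms by (intro psubset_card_mono) auto

lemma int_merge_exp_Diff_singleton:
  assumes "finite M" "u \<in> M"
  shows "int (merge_exp (M - {u}) x y) = int (merge_exp M x y) - (if u < max x y then 1 else 0)"
proof -
  have set_eq: "{m \<in> M - {u}. m < max x y} = {m \<in> M. m < max x y} - {u}"
    by blast
  show ?thesis
  proof (cases "u < max x y")
    case True
    then have "Suc (rank (M - {u}) (max x y)) = rank M (max x y)"
      unfolding rank_def set_eq using assms by (intro card_Suc_Diff1) auto
    then show ?thesis
      using True by (simp add: merge_exp_def)
  next
    case False
    then have "rank (M - {u}) (max x y) = rank M (max x y)"
      unfolding rank_def set_eq by simp
    then show ?thesis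
      using False by (simp add: merge_exp_def)
  qed
qed

lemma linorder_cases3:
  fixes p q r :: "'a::linorder"
  assumes "p \<noteq> q" "p \<noteq> r" "q \<noteq> r"
  obtains "p < q" "q < r" "p < r" | "p < r" "r < q" "p < q" | "q < p" "p < r" "q < r"
    | "q < r" "r < p" "q < p" | "r < p" "p < q" "r < q" | "r < q" "q < p" "r < p"
  using assms by (meson less_trans linorder_neqE)

(* The exponent of joining first the components with minima x and y and then those containing z
   and w, with the rank function abstracted to R so that its parity is a matter of order alone. *)
definition two_merge_exp :: "('a::linorder \<Rightarrow> int) \<Rightarrow> 'a \<Rightarrow> 'a \<Rightarrow> 'a \<Rightarrow> 'a \<Rightarrow> int" where
  "two_merge_exp R x y z w =
    R (max x y) + (if y < x then 1 else 0)
    + R (max (merge_min x y z) (merge_min x y w))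
    - (if max x y < max (merge_min x y z) (merge_min x y w) then 1 else 0)
    + (if merge_min x y w < merge_min x y z then 1 else 0)"

lemma int_merge_exp_two_steps:
  assumes "finite M" "x \<in> M" "y \<in> M"
  shows "int (merge_exp M x y + merge_exp (M - {max x y}) (merge_min x y z) (merge_min x y w))
    = two_merge_exp (\<lambda>t. int (rank M t)) x y z w"
proof -
  have "max x y \<in> M"
    using assms(2,3) by (simp add: max_def)
  then show ?thesis
    using int_merge_exp_Diff_singleton[OF assms(1), of "max x y" "merge_min x y z" "merge_min x y w"]
    by (simp add: two_merge_exp_def merge_exp_def)
qed

lemma odd_two_merge_exp_shared:
  fixes x y w :: "'a::linorder"
  assumes "x \<noteq> y" "x \<noteq> w" "y \<noteq> w"
  shows "odd (two_merge_exp R x y x w + two_merge_exp R x w x y)"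
    and "odd (two_merge_exp R x y w x + two_merge_exp R w x x y)"
    and "odd (two_merge_exp R x y y w + two_merge_exp R y w x y)"
    and "odd (two_merge_exp R x y w y + two_merge_exp R w y x y)"
  using assms
  by (cases rule: linorder_cases3[OF assms];
      simp add: two_merge_exp_def merge_min_def max_def min_def not_less[symmetric] less_not_sym)+

lemma odd_two_merge_exp:
  fixes x y z w :: "'a::linorder"
  assumes "x \<noteq> y" "z \<noteq> w" "{x, y} \<noteq> {z, w}"
  shows "odd (two_merge_exp R x y z w + two_merge_exp R z w x y)"
proof -
  consider "{x, y} \<inter> {z, w} = {}" | "z = x" "w \<noteq> x" "w \<noteq> y" | "z = y" "w \<noteq> x" "w \<noteq> y"
    | "w = x" "z \<noteq> x" "z \<noteq> y" | "w = y" "z \<noteq> x" "z \<noteq> y"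
    using assms by auto
  then show ?thesis
  proof cases
    case 1
    then have "merge_min x y z = z" "merge_min x y w = w" "merge_min z w x = x" "merge_min z w y = y"
      "(if max x y < max z w then 1 else 0) + (if max z w < max x y then 1 else 0) = (1::int)"
      by (auto simp: merge_min_def max_def)
    then show ?thesis
      by (simp add: two_merge_exp_def algebra_simps del: max_less_iff_conj)
  qed (use odd_two_merge_exp_shared[of x y, OF assms(1)] in auto)
qed

lemma odd_merge_exp_square:
  fixes M :: "'a::linorder set"
  assumes "finite M" "x \<in> M" "y \<in> M" "z \<in> M" "w \<in> M" "x \<noteq> y" "z \<noteq> w" "{x, y} \<noteq> {z, w}"
  shows "odd (merge_exp M x y + merge_exp (M - {max x y}) (merge_min x y z) (merge_min x y w)
            + merge_exp M z w + merge_exp (M - {max z w}) (merge_min z w x) (merge_min z w y))"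
proof -
  have "odd (int (merge_exp M x y + merge_exp (M - {max x y}) (merge_min x y z) (merge_min x y w))
      + int (merge_exp M z w + merge_exp (M - {max z w}) (merge_min z w x) (merge_min z w y)))"
    unfolding int_merge_exp_two_steps[OF assms(1-3)] int_merge_exp_two_steps[OF assms(1,4,5)]
    by (rule odd_two_merge_exp[OF assms(6-8)])
  then show ?thesis
    by (simp only: of_nat_add[symmetric] even_of_nat add.assoc not_False_eq_True)
qed

lemma comp_index_eq_rank:
  assumes "finite V" "v \<in> V"
  shows "comp_index V H v = rank (comp_min V H ` V) (comp_min V H v) + 1"
proof -
  let ?smaller = "{D \<in> comps V H. Min D < comp_min V H v}"
  have "Min ` ?smaller = {m \<in> comp_min V H ` V. m < comp_min V H v}"
    unfolding comps_def comp_min_def by blast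
  moreover have "inj_on Min ?smaller"
    using inj_on_Min_comps[OF assms(1), of H] by (rule inj_on_subset) blast
  ultimately have "card ?smaller = rank (comp_min V H ` V) (comp_min V H v)"
    unfolding rank_def using card_image by fastforce
  then show ?thesis
    by (simp add: comp_index_def comp_min_def)
qed

lemma eps_eq_merge_exp:
  assumes "finite V" "a \<in> V" "b \<in> V" "(a, b) \<notin> (undirected H)\<^sup>*"
  shows "eps V H (a, b) = (-1) ^ merge_exp (comp_min V H ` V) (comp_min V H a) (comp_min V H b)"
proof -
  let ?M = "comp_min V H ` V" and ?x = "comp_min V H a" and ?y = "comp_min V H b"
  have "?x \<noteq> ?y"
    using comp_min_eq_iff[OF assms(1-3)] assms(4) by simp
  moreover have "?x \<in> ?M" "?y \<in> ?M" "finite ?M"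
    using assms(1-3) by auto
  ultimately show ?thesis
  proof (cases "?x < ?y")
    case True
    then have "sigma V H (a, b) = rank ?M ?y + 2"
      using rank_less[OF \<open>finite ?M\<close> \<open>?x \<in> ?M\<close> True]
      by (simp add: sigma_def Let_def comp_index_eq_rank assms(1-3))
    then show ?thesis
      using True by (simp add: eps_def merge_exp_def)
  next
    case False
    then have "?y < ?x"
      using \<open>?x \<noteq> ?y\<close> by simp
    then have "sigma V H (a, b) = rank ?M ?x + 1"
      using rank_less[OF \<open>finite ?M\<close> \<open>?y \<in> ?M\<close> \<open>?y < ?x\<close>]
      by (simp add: sigma_def Let_def comp_index_eq_rank assms(1-3))
    then show ?thesis
      using \<open>?y < ?x\<close> by (simp add: eps_def merge_exp_def)
  qed
qed

lemma minus_one_power_eq_minus: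
  "odd (m + n) \<Longrightarrow> (-1 :: 'a::ring_1) ^ m = - ((-1) ^ n)"
  by (auto simp: minus_one_power_iff)

lemma eps_two_steps:
  fixes V :: "'v::linorder set" and K :: "('v \<times> 'v) set" and a b c d :: 'v
  defines "M \<equiv> comp_min V K ` V"
    and "x \<equiv> comp_min V K a" and "y \<equiv> comp_min V K b"
    and "z \<equiv> comp_min V K c" and "w \<equiv> comp_min V K d"
  assumes "finite V" "a \<in> V" "b \<in> V" "c \<in> V" "d \<in> V"
    and "(a, b) \<notin> (undirected K)\<^sup>*" "(c, d) \<notin> (undirected (insert (a, b) K))\<^sup>*"
  shows "eps V K (a, b) * eps V (insert (a, b) K) (c, d)
    = (-1) ^ (merge_exp M x y + merge_exp (M - {max x y}) (merge_min x y z) (merge_min x y w))"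
proof -
  have "eps V (insert (a, b) K) (c, d)
      = (-1) ^ merge_exp (M - {max x y}) (merge_min x y z) (merge_min x y w)"
    using eps_eq_merge_exp[OF assms(6,9,10,12)] unfolding M_def x_def y_def z_def w_def
    by (simp only: comp_min_image_insert[OF assms(6-8,11)]
        comp_min_insert[OF assms(6-8,9)] comp_min_insert[OF assms(6-8,10)])
  then show ?thesis
    using eps_eq_merge_exp[OF assms(6-8,11)] unfolding M_def x_def y_def
    by (simp add: power_add)
qed

lemma forest_insert_insert_not_connected:
  fixes V :: "'v::linorder set"
  assumes "finite V" "insert (c, d) (insert (a, b) K) \<subseteq> V \<times> V"
    and "forest V (insert (c, d) (insert (a, b) K))" "(a, b) \<notin> K" "(c, d) \<notin> insert (a, b) K"
  shows "(a, b) \<notin> (undirected K)\<^sup>*" "(c, d) \<notin> (undirected (insert (a, b) K))\<^sup>*"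
proof -
  have "forest V (insert (a, b) K)"
    using forest_subset[OF assms(1-3)] by blast
  then show "(a, b) \<notin> (undirected K)\<^sup>*"
    using forest_insert_not_connected[OF assms(1)] assms(2,4) by blast
  show "(c, d) \<notin> (undirected (insert (a, b) K))\<^sup>*"
    by (rule forest_insert_not_connected[OF assms(1,2,5,3)])
qed

lemma comp_min_pairs_ne:
  assumes "finite V" "a \<in> V" "b \<in> V" "c \<in> V" "d \<in> V"
    and "(c, d) \<notin> (undirected (insert (a, b) K))\<^sup>*"
  shows "{comp_min V K a, comp_min V K b} \<noteq> {comp_min V K c, comp_min V K d}"
proof
  assume "{comp_min V K a, comp_min V K b} = {comp_min V K c, comp_min V K d}"
  then have "comp_min V K c = comp_min V K a \<and> comp_min V K b = comp_min V K d \<or>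
             comp_min V K c = comp_min V K b \<and> comp_min V K a = comp_min V K d"
    by (auto simp: doubleton_eq_iff)
  then have "(c, a) \<in> (undirected K)\<^sup>* \<and> (b, d) \<in> (undirected K)\<^sup>* \<or>
             (c, b) \<in> (undirected K)\<^sup>* \<and> (a, d) \<in> (undirected K)\<^sup>*"
    using comp_min_eq_iff[OF assms(1), of _ _ K] assms(2-5) by blast
  then show False
    using assms(6) undirected_rtrancl_insert[of c d a b K] by blast
qed

lemma eps_anticommute:
  fixes V :: "'v::linorder set"
  assumes "finite V" "insert e (insert e' K) \<subseteq> V \<times> V" "forest V (insert e (insert e' K))"
    and "e \<notin> K" "e' \<notin> K" "e \<noteq> e'"
  shows "eps V K e * eps V (insert e K) e' = - (eps V K e' * eps V (insert e' K) e)"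
proof -
  obtain a b c d where e: "e = (a, b)" and e': "e' = (c, d)"
    by fastforce
  have V: "a \<in> V" "b \<in> V" "c \<in> V" "d \<in> V"
    using assms(2) e e' by auto
  have "insert (a, b) (insert (c, d) K) = insert (c, d) (insert (a, b) K)"
    by blast
  then have not_connected:
      "(a, b) \<notin> (undirected K)\<^sup>*" "(c, d) \<notin> (undirected (insert (a, b) K))\<^sup>*"
      "(c, d) \<notin> (undirected K)\<^sup>*" "(a, b) \<notin> (undirected (insert (c, d) K))\<^sup>*"
    using forest_insert_insert_not_connected[OF assms(1), of c d a b K]
      forest_insert_insert_not_connected[OF assms(1), of a b c d K] assms(2-6) e e' by auto
  let ?M = "comp_min V K ` V"
  let ?x = "comp_min V K a" and ?y = "comp_min V K b" and ?z = "comp_min V K c" and ?w = "comp_min V K d"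
  have "?x \<noteq> ?y" "?z \<noteq> ?w"
    using not_connected(1,3) comp_min_eq_iff[OF assms(1)] V by auto
  then have "odd (merge_exp ?M ?x ?y + merge_exp (?M - {max ?x ?y}) (merge_min ?x ?y ?z) (merge_min ?x ?y ?w)
      + (merge_exp ?M ?z ?w + merge_exp (?M - {max ?z ?w}) (merge_min ?z ?w ?x) (merge_min ?z ?w ?y)))"
    using odd_merge_exp_square[OF finite_imageI[OF assms(1)] imageI[OF V(1)] imageI[OF V(2)]
        imageI[OF V(3)] imageI[OF V(4)] _ _ comp_min_pairs_ne[OF assms(1) V not_connected(2)]]
    unfolding add.assoc by blast
  then show ?thesis
    unfolding e e' eps_two_steps[OF assms(1) V not_connected(1,2)]
      eps_two_steps[OF assms(1) V(3,4,1,2) not_connected(3,4)]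
    by (rule minus_one_power_eq_minus)
qed

lemma eps_anticommute_multipath:
  assumes "digraph V E" "H \<in> multipaths V E" "T \<subseteq> H" "e \<in> H" "e' \<in> H" "e \<notin> T" "e' \<notin> T" "e \<noteq> e'"
  shows "eps V T e * eps V (insert e T) e' = - (eps V T e' * eps V (insert e' T) e)"
proof -
  have V: "finite V" "E \<subseteq> V \<times> V" "H \<subseteq> V \<times> V"
    using assms(1) multipath_subset_square[OF assms(1,2)] unfolding digraph_def by auto
  have "insert e (insert e' T) \<subseteq> H"
    using assms(3-5) by blast
  then have "forest V (insert e (insert e' T))"
    by (rule forest_subset[OF V(1,3) multipath_forest[OF V(1,2) assms(2)]])
  moreover have "insert e (insert e' T) \<subseteq> V \<times> V"
    using \<open>insert e (insert e' T) \<subseteq> H\<close> V(3) by blast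
  ultimately show ?thesis
    using eps_anticommute[OF V(1)] assms(6-8) by blast
qed

lemma eps_mult_self [simp]: "eps V H e * eps V H e = 1"
  unfolding eps_def by (simp flip: power_mult_distrib)

section \<open>Regular morphisms and multipaths\<close>

lemma regular_morphism_id: "regular_morphism V E V E id"
  unfolding regular_morphism_def by auto

lemma regular_morphism_comp:
  assumes "regular_morphism V2 E2 V1 E1 \<phi>" "regular_morphism V3 E3 V2 E2 \<psi>"
  shows "regular_morphism V3 E3 V1 E1 (\<phi> \<circ> \<psi>)"
  using assms comp_inj_on[of \<psi> V3 \<phi>] inj_on_subset[of \<phi> V2 "\<psi> ` V3"]
  unfolding regular_morphism_def by (auto simp: image_subset_iff)

lemma regular_morphism_inj_on_edges:
  assumes "digraph V' E'" "regular_morphism V' E' V E \<phi>" "K \<subseteq> E'"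
  shows "inj_on (map_prod \<phi> \<phi>) K"
proof -
  have "inj_on \<phi> V'" "K \<subseteq> V' \<times> V'"
    using assms unfolding regular_morphism_def digraph_def by auto
  then show ?thesis
    using inj_on_subset[OF map_prod_inj_on] by blast
qed

lemma set_zip_tl_map:
  "set (zip (map h vs) (tl (map h vs))) = map_prod h h ` set (zip vs (tl vs))"
  by (simp add: map_tl[symmetric] zip_map_map map_prod_def)

lemma set_zip_tl_subset: "set (zip vs (tl vs)) \<subseteq> set vs \<times> set vs"
  by (cases vs) (auto dest: set_zip_leftD set_zip_rightD)

lemma is_dipath_image:
  assumes "inj_on h Dom" "C \<subseteq> Dom" "is_dipath C F"
  shows "is_dipath (h ` C) (map_prod h h ` F)"
proof -
  obtain vs where "distinct vs" "set vs = C" "F = set (zip vs (tl vs))"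
    using assms(3) unfolding is_dipath_def by blast
  then show ?thesis
    using assms(1,2) unfolding is_dipath_def
    by (metis distinct_map inj_on_subset set_map set_zip_tl_map)
qed

lemma is_dipath_image_iff:
  assumes "inj_on h Dom" "C \<subseteq> Dom" "F \<subseteq> Dom \<times> Dom"
  shows "is_dipath (h ` C) (map_prod h h ` F) \<longleftrightarrow> is_dipath C F"
proof
  assume "is_dipath (h ` C) (map_prod h h ` F)"
  then obtain ws where ws: "distinct ws" "set ws = h ` C" "map_prod h h ` F = set (zip ws (tl ws))"
    unfolding is_dipath_def by blast
  define vs where "vs = map (inv_into Dom h) ws"
  have "set ws \<subseteq> h ` Dom"
    using ws(2) assms(2) by blast
  then have "map h vs = ws"
    unfolding vs_def by (auto intro!: map_idI f_inv_into_f[of _ h Dom])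
  moreover have "set vs = C"
    unfolding vs_def using ws(2) assms(1,2) by simp
  moreover have "set (zip vs (tl vs)) \<subseteq> Dom \<times> Dom"
    using set_zip_tl_subset[of vs] \<open>set vs = C\<close> assms(2) by blast
  ultimately have "F = set (zip vs (tl vs))"
    using ws(3) inj_on_image_eq_iff[OF map_prod_inj_on[OF assms(1,1)] assms(3)] set_zip_tl_map
    by metis
  then show "is_dipath C F"
    unfolding is_dipath_def using \<open>map h vs = ws\<close> \<open>set vs = C\<close> ws(1) distinct_map by metis
qed (rule is_dipath_image[OF assms(1,2)])

lemma is_dipath_singleton: "is_dipath {u} {}"
  unfolding is_dipath_def by (intro exI[of _ "[u]"]) simp

lemma undirected_rtrancl_image:
  "(v, w) \<in> (undirected K)\<^sup>* \<Longrightarrow> (h v, h w) \<in> (undirected (map_prod h h ` K))\<^sup>*"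
proof (induction rule: rtrancl_induct)
  case (step y z)
  then have "(h y, h z) \<in> undirected (map_prod h h ` K)"
    by force
  with step.IH show ?case
    by (rule rtrancl_into_rtrancl)
qed simp

lemma undirected_rtrancl_image_inv:
  assumes "inj_on h Dom" "K \<subseteq> Dom \<times> Dom" "v \<in> Dom"
    and "(h v, u) \<in> (undirected (map_prod h h ` K))\<^sup>*"
  shows "\<exists>w \<in> Dom. u = h w \<and> (v, w) \<in> (undirected K)\<^sup>*"
  using assms(4)
proof (induction rule: rtrancl_induct)
  case (step y z)
  then obtain w where w: "w \<in> Dom" "y = h w" "(v, w) \<in> (undirected K)\<^sup>*"
    by blast
  from step.hyps(2) obtain p q where "(p, q) \<in> K" "(y, z) = (h p, h q) \<or> (y, z) = (h q, h p)"
    by auto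
  moreover have "p \<in> Dom" "q \<in> Dom"
    using \<open>(p, q) \<in> K\<close> assms(2) by auto
  ultimately consider "(w, q) \<in> K" "z = h q" | "(p, w) \<in> K" "z = h p"
    using w assms(1) by (auto dest: inj_onD)
  then show ?case
  proof cases
    case 1
    then show ?thesis
      using rtrancl_into_rtrancl[OF w(3), of q] \<open>q \<in> Dom\<close> by blast
  next
    case 2
    then show ?thesis
      using rtrancl_into_rtrancl[OF w(3), of p] \<open>p \<in> Dom\<close> by blast
  qed
qed (use assms(3) in blast)

lemma comp_of_image:
  assumes "inj_on h Dom" "K \<subseteq> Dom \<times> Dom" "v \<in> Dom" "h ` Dom \<subseteq> Y"
  shows "comp_of Y (map_prod h h ` K) (h v) = h ` comp_of Dom K v"
  using undirected_rtrancl_image_inv[OF assms(1-3)] undirected_rtrancl_image[of v _ K h] assms(4)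
  unfolding comp_of_def by blast

lemma comp_of_outside_image:
  assumes "K \<subseteq> Dom \<times> Dom" "u \<in> Y" "u \<notin> h ` Dom"
  shows "comp_of Y (map_prod h h ` K) u = {u}"
proof -
  have "x = u" if "(u, x) \<in> (undirected (map_prod h h ` K))\<^sup>*" for x
    using that
  proof (induction rule: rtrancl_induct)
    case (step y z)
    then show ?case
      using assms(1,3) by auto
  qed simp
  then show ?thesis
    using assms(2) by (auto simp: comp_of_def)
qed

lemma Restr_image:
  assumes "inj_on h Dom" "K \<subseteq> Dom \<times> Dom" "C \<subseteq> Dom"
  shows "Restr (map_prod h h ` K) (h ` C) = map_prod h h ` Restr K C"
  using assms by (auto simp: inj_on_def) blast

lemma comps_image:
  assumes "inj_on h Dom" "K \<subseteq> Dom \<times> Dom" "h ` Dom \<subseteq> Y"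
  shows "comps Y (map_prod h h ` K) = (\<lambda>C. h ` C) ` comps Dom K \<union> (\<lambda>u. {u}) ` (Y - h ` Dom)"
proof -
  have "comp_of Y (map_prod h h ` K) ` (h ` Dom) = (\<lambda>C. h ` C) ` comps Dom K"
    using comp_of_image[OF assms(1,2) _ assms(3)] unfolding comps_def by (simp add: image_image)
  moreover have "comp_of Y (map_prod h h ` K) ` (Y - h ` Dom) = (\<lambda>u. {u}) ` (Y - h ` Dom)"
    by (intro image_cong refl comp_of_outside_image[OF assms(2)]) auto
  moreover have "comps Y (map_prod h h ` K)
      = comp_of Y (map_prod h h ` K) ` (h ` Dom) \<union> comp_of Y (map_prod h h ` K) ` (Y - h ` Dom)"
    unfolding comps_def image_Un[symmetric] using assms(3) by (simp add: Un_absorb1)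
  ultimately show ?thesis
    by simp
qed

lemma multipath_image_iff:
  assumes "digraph V' E'" "regular_morphism V' E' V E \<phi>" "K \<subseteq> E'"
  shows "map_prod \<phi> \<phi> ` K \<in> multipaths V E \<longleftrightarrow> K \<in> multipaths V' E'"
proof -
  have inj: "inj_on \<phi> V'" and img: "\<phi> ` V' \<subseteq> V" and "map_prod \<phi> \<phi> ` K \<subseteq> E"
    using assms(2,3) unfolding regular_morphism_def by auto
  have KV: "K \<subseteq> V' \<times> V'"
    using assms(1,3) unfolding digraph_def by auto
  have "is_dipath (\<phi> ` C) (Restr (map_prod \<phi> \<phi> ` K) (\<phi> ` C)) \<longleftrightarrow> is_dipath C (Restr K C)"
    if "C \<in> comps V' K" for C
  proof -
    have "C \<subseteq> V'"
      using that comp_of_subset[of V' K] unfolding comps_def by blast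
    moreover have "Restr K C \<subseteq> V' \<times> V'"
      using KV by blast
    ultimately show ?thesis
      by (simp only: Restr_image[OF inj KV] is_dipath_image_iff[OF inj])
  qed
  moreover have "Restr (map_prod \<phi> \<phi> ` K) {u} = {}" if "u \<notin> \<phi> ` V'" for u
    using that KV by auto
  ultimately have "(\<forall>C \<in> comps V (map_prod \<phi> \<phi> ` K). is_dipath C (Restr (map_prod \<phi> \<phi> ` K) C))
      \<longleftrightarrow> (\<forall>C \<in> comps V' K. is_dipath C (Restr K C))"
    unfolding comps_image[OF inj KV img] using is_dipath_singleton by auto
  then show ?thesis
    using \<open>map_prod \<phi> \<phi> ` K \<subseteq> E\<close> assms(3) unfolding multipaths_def by blast
qed

lemma multipaths_n_image_iff:
  assumes "digraph V' E'" "regular_morphism V' E' V E \<phi>" "K \<subseteq> E'"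
  shows "map_prod \<phi> \<phi> ` K \<in> multipaths_n V E n \<longleftrightarrow> K \<in> multipaths_n V' E' n"
  using multipath_image_iff[OF assms] card_image[OF regular_morphism_inj_on_edges[OF assms]]
  by (simp add: multipaths_n_def)

section \<open>The gauge\<close>

definition chain_prod :: "('e set \<Rightarrow> 'e \<Rightarrow> 'b::comm_monoid_mult) \<Rightarrow> 'e list \<Rightarrow> 'b" where
  "chain_prod \<rho> es = (\<Prod>i<length es. \<rho> (set (take i es)) (es ! i))"

lemma chain_prod_snoc: "chain_prod \<rho> (xs @ [x]) = chain_prod \<rho> xs * \<rho> (set xs) x"
proof -
  have "(\<Prod>i<length xs. \<rho> (set (take i (xs @ [x]))) ((xs @ [x]) ! i)) = chain_prod \<rho> xs"
    unfolding chain_prod_def by (rule prod.cong) (auto simp: nth_append)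
  then show ?thesis
    unfolding chain_prod_def by (simp add: prod.lessThan_Suc)
qed

lemma chain_prod_eq:
  assumes square: "\<And>T e e'. T \<subseteq> S \<Longrightarrow> e \<in> S \<Longrightarrow> e' \<in> S \<Longrightarrow> e \<notin> T \<Longrightarrow> e' \<notin> T \<Longrightarrow> e \<noteq> e' \<Longrightarrow>
      \<rho> T e * \<rho> (insert e T) e' = \<rho> T e' * \<rho> (insert e' T) e"
    and "distinct es" "distinct es'" "set es = set es'" "set es \<subseteq> S"
  shows "chain_prod \<rho> es = chain_prod \<rho> es'"
  using assms(2-)
proof (induction "length es" arbitrary: es es')
  case 0
  then show ?case
    by simp
next
  case (Suc n)
  obtain xs x where es: "es = xs @ [x]"
    using Suc.hyps(2) by (cases es rule: rev_exhaust) auto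
  obtain ys y where es': "es' = ys @ [y]"
    using Suc.prems(3) es by (cases es' rule: rev_exhaust) auto
  have "length es' = length es"
    using Suc.prems(1-3) distinct_card by metis
  then have lengths: "length xs = n" "length ys = n"
    using Suc.hyps(2) es es' by simp_all
  have distinct: "distinct xs" "x \<notin> set xs" "distinct ys" "y \<notin> set ys"
    using Suc.prems(1,2) es es' by auto
  have sets: "insert x (set xs) = insert y (set ys)" "insert x (set xs) \<subseteq> S"
    using Suc.prems(3,4) es es' by auto
  show ?case
  proof (cases "x = y")
    case True
    then have "set xs = set ys"
      using sets(1) distinct insert_ident by metis
    then have "chain_prod \<rho> xs = chain_prod \<rho> ys"
      using Suc.hyps(1)[OF lengths(1)[symmetric] distinct(1,3)] sets(2) by blast
    then show ?thesis
      using es es' True \<open>set xs = set ys\<close> by (simp add: chain_prod_snoc)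
  next
    case False
    define T where "T = set xs - {y}"
    obtain zs where zs: "set zs = T" "distinct zs"
      using finite_distinct_list[of T] unfolding T_def by blast
    have T: "set xs = insert y T" "set ys = insert x T" "x \<notin> T" "y \<notin> T" "T \<subseteq> S" "x \<in> S" "y \<in> S"
      using sets distinct False unfolding T_def by auto
    have "length zs + 1 = n"
      using distinct_card[OF distinct(1)] distinct_card[OF zs(2)] zs(1) T(1,4) lengths(1)
      by (metis List.finite_set card_insert_disjoint Suc_eq_plus1)
    then have "chain_prod \<rho> xs = chain_prod \<rho> (zs @ [y])" "chain_prod \<rho> ys = chain_prod \<rho> (zs @ [x])"
      using Suc.hyps(1)[OF lengths(1)[symmetric] distinct(1), of "zs @ [y]"]
        Suc.hyps(1)[OF lengths(2)[symmetric] distinct(3), of "zs @ [x]"] zs T by auto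
    moreover have "\<rho> T y * \<rho> (insert y T) x = \<rho> T x * \<rho> (insert x T) y"
      using square[of T y x] T False by auto
    ultimately show ?thesis
      using es es' zs(1) T(1,2) by (simp add: chain_prod_snoc mult.assoc)
  qed
qed

definition gauge_factor ::
    "'v::linorder set \<Rightarrow> 'w::linorder set \<Rightarrow> ('w \<Rightarrow> 'v) \<Rightarrow> ('w \<times> 'w) set \<Rightarrow> 'w \<times> 'w \<Rightarrow> int" where
  "gauge_factor V V' \<phi> T e = eps V (map_prod \<phi> \<phi> ` T) (map_prod \<phi> \<phi> e) * eps V' T e"

lemma gauge_eq_chain_prod: "gauge V V' \<phi> H = chain_prod (gauge_factor V V' \<phi>) (sorted_list_of_set H)"
  unfolding gauge_def chain_prod_def gauge_factor_def Let_def ..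

lemma mult_anticommute_pairs:
  fixes a b c d a' b' c' d' :: "'a::comm_ring"
  assumes "a * b = - (c * d)" "a' * b' = - (c' * d')"
  shows "(a * a') * (b * b') = (c * c') * (d * d')"
proof -
  have "(a * a') * (b * b') = (a * b) * (a' * b')"
    by (simp add: mult_ac)
  also have "\<dots> = (c * d) * (c' * d')"
    using assms by simp
  finally show ?thesis
    by (simp add: mult_ac)
qed

lemma gauge_factor_square:
  assumes "digraph V E" "digraph V' E'" "regular_morphism V' E' V E \<phi>" "H \<in> multipaths V' E'"
    and "T \<subseteq> H" "e \<in> H" "e' \<in> H" "e \<notin> T" "e' \<notin> T" "e \<noteq> e'"
  shows "gauge_factor V V' \<phi> T e * gauge_factor V V' \<phi> (insert e T) e'
    = gauge_factor V V' \<phi> T e' * gauge_factor V V' \<phi> (insert e' T) e"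
proof -
  let ?P = "map_prod \<phi> \<phi>"
  have "inj_on ?P H"
    by (rule regular_morphism_inj_on_edges[OF assms(2,3) multipaths_subset[OF assms(4)]])
  then have distinct: "?P e \<notin> ?P ` T" "?P e' \<notin> ?P ` T" "?P e \<noteq> ?P e'"
    using assms(5-10) by (simp_all add: inj_on_image_mem_iff inj_on_eq_iff)
  have image: "?P ` H \<in> multipaths V E" "?P ` T \<subseteq> ?P ` H" "?P e \<in> ?P ` H" "?P e' \<in> ?P ` H"
    using multipath_image_iff[OF assms(2,3) multipaths_subset[OF assms(4)]] assms(4-7) by auto
  have "eps V (?P ` T) (?P e) * eps V (insert (?P e) (?P ` T)) (?P e')
      = - (eps V (?P ` T) (?P e') * eps V (insert (?P e') (?P ` T)) (?P e))"
    by (rule eps_anticommute_multipath[OF assms(1) image distinct])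
  moreover have "eps V' T e * eps V' (insert e T) e' = - (eps V' T e' * eps V' (insert e' T) e)"
    by (rule eps_anticommute_multipath[OF assms(2,4-10)])
  ultimately show ?thesis
    unfolding gauge_factor_def image_insert by (rule mult_anticommute_pairs)
qed

lemma gauge_remove:
  assumes "digraph V E" "digraph V' E'" "regular_morphism V' E' V E \<phi>" "H \<in> multipaths V' E'" "e \<in> H"
  shows "gauge V V' \<phi> H = gauge V V' \<phi> (H - {e}) * gauge_factor V V' \<phi> (H - {e}) e"
proof -
  have "finite H"
    by (rule multipath_finite[OF assms(2,4)])
  have "chain_prod (gauge_factor V V' \<phi>) (sorted_list_of_set H)
      = chain_prod (gauge_factor V V' \<phi>) (sorted_list_of_set (H - {e}) @ [e])"
    using gauge_factor_square[OF assms(1-4)] \<open>finite H\<close> assms(5)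
    by (intro chain_prod_eq[where S = H]) auto
  then show ?thesis
    unfolding gauge_eq_chain_prod using \<open>finite H\<close> by (simp add: chain_prod_snoc)
qed

lemma gauge_mult_eps:
  assumes "digraph V E" "digraph V' E'" "regular_morphism V' E' V E \<phi>" "H \<in> multipaths V' E'" "e \<in> H"
  shows "gauge V V' \<phi> H * eps V (map_prod \<phi> \<phi> ` (H - {e})) (map_prod \<phi> \<phi> e)
    = eps V' (H - {e}) e * gauge V V' \<phi> (H - {e})"
  unfolding gauge_remove[OF assms] gauge_factor_def
  by (simp add: mult_ac flip: mult.assoc[of "eps V _ _"])

lemma gauge_id: "gauge V V id H = 1"
  unfolding gauge_def Let_def by (simp add: map_prod.id)

lemma gauge_comp:
  assumes "digraph V1 E1" "digraph V2 E2" "digraph V3 E3"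
    and "regular_morphism V2 E2 V1 E1 \<phi>" "regular_morphism V3 E3 V2 E2 \<psi>" "H \<in> multipaths V3 E3"
  shows "gauge V1 V3 (\<phi> \<circ> \<psi>) H = gauge V1 V2 \<phi> (map_prod \<psi> \<psi> ` H) * gauge V2 V3 \<psi> H"
proof -
  let ?Q = "map_prod \<psi> \<psi>" and ?es = "sorted_list_of_set H"
  have "finite H"
    by (rule multipath_finite[OF assms(3,6)])
  have "inj_on ?Q H"
    by (rule regular_morphism_inj_on_edges[OF assms(3,5) multipaths_subset[OF assms(6)]])
  have "?Q ` H \<in> multipaths V2 E2"
    using multipath_image_iff[OF assms(3,5) multipaths_subset[OF assms(6)]] assms(6) by simp
  then have "gauge V1 V2 \<phi> (?Q ` H) = chain_prod (gauge_factor V1 V2 \<phi>) (map ?Q ?es)"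
    unfolding gauge_eq_chain_prod using gauge_factor_square[OF assms(1,2,4)] \<open>finite H\<close> \<open>inj_on ?Q H\<close>
    by (intro chain_prod_eq[where S = "?Q ` H"]) (auto simp: distinct_map)
  also have "\<dots> = (\<Prod>i<length ?es. gauge_factor V1 V2 \<phi> (?Q ` set (take i ?es)) (?Q (?es ! i)))"
    unfolding chain_prod_def by (simp add: take_map)
  finally have "gauge V1 V2 \<phi> (?Q ` H) * gauge V2 V3 \<psi> H
      = (\<Prod>i<length ?es. gauge_factor V1 V2 \<phi> (?Q ` set (take i ?es)) (?Q (?es ! i))
          * gauge_factor V2 V3 \<psi> (set (take i ?es)) (?es ! i))"
    unfolding gauge_eq_chain_prod[of V2] chain_prod_def by (simp add: prod.distrib)
  also have "\<dots> = gauge V1 V3 (\<phi> \<circ> \<psi>) H"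
    unfolding gauge_eq_chain_prod chain_prod_def gauge_factor_def
    by (rule prod.cong) (simp_all add: map_prod_compose image_comp mult.assoc)
  finally show ?thesis
    by simp
qed

section \<open>Induced cochain maps\<close>

lemma ring_homomorphism_additive: "ring_homomorphism f \<Longrightarrow> additive f"
  unfolding ring_homomorphism_def by (simp add: additive.intro)

lemma ring_homomorphism_mult: "ring_homomorphism f \<Longrightarrow> f (x * y) = f x * f y"
  unfolding ring_homomorphism_def by blast

lemma ring_homomorphism_sum: "ring_homomorphism f \<Longrightarrow> f (sum g A) = (\<Sum>x\<in>A. f (g x))"
  using additive.sum[OF ring_homomorphism_additive] by blast

lemma ring_homomorphism_zero: "ring_homomorphism f \<Longrightarrow> f 0 = 0"
  using additive.zero[OF ring_homomorphism_additive] by blast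

lemma ring_homomorphism_of_int:
  assumes "ring_homomorphism f"
  shows "f (of_int k) = of_int k"
proof -
  interpret additive f
    by (rule ring_homomorphism_additive[OF assms])
  have of_nat: "f (of_nat n) = of_nat n" for n
    using assms by (induction n) (simp_all add: zero add ring_homomorphism_def)
  show ?thesis
    using assms by (cases k rule: int_cases) (simp_all add: of_nat diff minus ring_homomorphism_def)
qed

lemma ring_homomorphism_id: "ring_homomorphism id"
  unfolding ring_homomorphism_def by simp

lemma ring_homomorphism_comp:
  "ring_homomorphism f \<Longrightarrow> ring_homomorphism g \<Longrightarrow> ring_homomorphism (g \<circ> f)"
  unfolding ring_homomorphism_def by simp

lemma cochain_eq_zero: "c \<in> cochains V E n \<Longrightarrow> H \<notin> multipaths_n V E n \<Longrightarrow> c H = 0"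
  unfolding cochains_def by blast

lemma pull_in_cochains: "pull V V' E' n \<phi> f c \<in> cochains V' E' n"
  unfolding pull_def cochains_def by auto

lemma pull_zero: "ring_homomorphism f \<Longrightarrow> pull V V' E' n \<phi> f (\<lambda>_. 0) = (\<lambda>_. 0)"
  by (rule ext) (simp add: pull_def ring_homomorphism_zero)

lemma pull_apply:
  assumes "digraph V' E'" "regular_morphism V' E' V E \<phi>" "ring_homomorphism f"
    and "c \<in> cochains V E n" "K \<subseteq> E'"
  shows "pull V V' E' n \<phi> f c K = of_int (gauge V V' \<phi> K) * f (c (map_prod \<phi> \<phi> ` K))"
proof (cases "K \<in> multipaths_n V' E' n")
  case False
  then have "c (map_prod \<phi> \<phi> ` K) = 0"
    using multipaths_n_image_iff[OF assms(1,2,5)] cochain_eq_zero[OF assms(4)] by blast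
  then show ?thesis
    using False ring_homomorphism_zero[OF assms(3)] by (simp add: pull_def)
qed (simp add: pull_def)

lemma dmap_image:
  assumes "inj_on h H" "h ` H \<in> multipaths_n V E (Suc n)"
  shows "dmap V E n c (h ` H) = (\<Sum>e\<in>H. of_int (eps V (h ` (H - {e})) (h e)) * c (h ` (H - {e})))"
  using assms by (simp add: dmap_def sum.reindex inj_on_image_set_diff cong: sum.cong)

lemma pull_dmap:
  assumes "digraph V E" "digraph V' E'" "regular_morphism V' E' V E \<phi>" "ring_homomorphism f"
    and "c \<in> cochains V E n"
  shows "pull V V' E' (Suc n) \<phi> f (dmap V E n c) = dmap V' E' n (pull V V' E' n \<phi> f c)"
proof
  fix H
  let ?P = "map_prod \<phi> \<phi>"
  show "pull V V' E' (Suc n) \<phi> f (dmap V E n c) H = dmap V' E' n (pull V V' E' n \<phi> f c) H"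
  proof (cases "H \<in> multipaths_n V' E' (Suc n)")
    case True
    have H: "H \<in> multipaths V' E'" "H \<subseteq> E'"
      using True multipaths_subset unfolding multipaths_n_def by auto
    have "?P ` H \<in> multipaths_n V E (Suc n)"
      using multipaths_n_image_iff[OF assms(2,3) H(2)] True by blast
    then have dmap: "dmap V E n c (?P ` H)
        = (\<Sum>e\<in>H. of_int (eps V (?P ` (H - {e})) (?P e)) * c (?P ` (H - {e})))"
      by (rule dmap_image[OF regular_morphism_inj_on_edges[OF assms(2,3) H(2)]])
    have summand: "of_int (gauge V V' \<phi> H) * (of_int (eps V (?P ` (H - {e})) (?P e)) * f (c (?P ` (H - {e}))))
        = of_int (eps V' (H - {e}) e) * pull V V' E' n \<phi> f c (H - {e})" if "e \<in> H" for e
    proof -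
      have "H - {e} \<subseteq> E'"
        using H(2) by blast
      then show ?thesis
        using gauge_mult_eps[OF assms(1-3) H(1) that]
        unfolding pull_apply[OF assms(2-5) \<open>H - {e} \<subseteq> E'\<close>]
        by (metis (no_types, lifting) mult.assoc of_int_mult)
    qed
    have "pull V V' E' (Suc n) \<phi> f (dmap V E n c) H = of_int (gauge V V' \<phi> H) * f (dmap V E n c (?P ` H))"
      using True by (simp add: pull_def)
    also have "\<dots> = (\<Sum>e\<in>H. of_int (gauge V V' \<phi> H)
        * (of_int (eps V (?P ` (H - {e})) (?P e)) * f (c (?P ` (H - {e})))))"
      by (simp add: dmap sum_distrib_left ring_homomorphism_sum[OF assms(4)]
          ring_homomorphism_mult[OF assms(4)] ring_homomorphism_of_int[OF assms(4)])
    also have "\<dots> = (\<Sum>e\<in>H. of_int (eps V' (H - {e}) e) * pull V V' E' n \<phi> f c (H - {e}))"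
      using summand by (rule sum.cong[OF refl])
    also have "\<dots> = dmap V' E' n (pull V V' E' n \<phi> f c) H"
      using True by (simp add: dmap_def)
    finally show ?thesis .
  qed (simp add: pull_def dmap_def)
qed

lemma pull_id: "c \<in> cochains V E n \<Longrightarrow> pull V V E n id id c = c"
  by (rule ext) (simp add: pull_def gauge_id map_prod.id cochain_eq_zero)

lemma pull_comp:
  assumes "digraph V1 E1" "digraph V2 E2" "digraph V3 E3"
    and "regular_morphism V2 E2 V1 E1 \<phi>" "regular_morphism V3 E3 V2 E2 \<psi>" "ring_homomorphism g"
  shows "pull V2 V3 E3 n \<psi> g (pull V1 V2 E2 n \<phi> f c) = pull V1 V3 E3 n (\<phi> \<circ> \<psi>) (g \<circ> f) c"
proof
  fix H
  show "pull V2 V3 E3 n \<psi> g (pull V1 V2 E2 n \<phi> f c) H = pull V1 V3 E3 n (\<phi> \<circ> \<psi>) (g \<circ> f) c H"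
  proof (cases "H \<in> multipaths_n V3 E3 n")
    case True
    then have "H \<in> multipaths V3 E3" "map_prod \<psi> \<psi> ` H \<in> multipaths_n V2 E2 n"
      using multipaths_n_image_iff[OF assms(3,5) multipaths_subset] unfolding multipaths_n_def
      by auto
    then show ?thesis
      using True gauge_comp[OF assms(1-5)]
      by (simp add: pull_def map_prod_compose image_comp mult_ac
          ring_homomorphism_mult[OF assms(6)] ring_homomorphism_of_int[OF assms(6)])
  qed (simp add: pull_def)
qed

section \<open>Cohomology\<close>

lemma comm_group_restrict:
  assumes "comm_group G" "subgroup H G"
  shows "comm_group (G\<lparr>carrier := H\<rparr>)"
proof -
  interpret G: comm_group G
    by (fact assms(1))
  show ?thesis
    using G.subgroup_imp_group[OF assms(2)] subgroup.mem_carrier[OF assms(2)]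
    by (intro group.group_comm_groupI) (auto intro: G.m_comm)
qed

lemma cochains_add:
  assumes "x \<in> cochains V E n" "y \<in> cochains V E n"
  shows "(\<lambda>H. x H + y H) \<in> cochains V E n"
proof -
  have "H \<in> multipaths_n V E n" if "x H + y H \<noteq> 0" for H
  proof -
    have "x H \<noteq> 0 \<or> y H \<noteq> 0"
      using that by auto
    then show ?thesis
      using assms unfolding cochains_def by blast
  qed
  then show ?thesis
    unfolding cochains_def by blast
qed

lemma comm_group_cochain_grp:
  "comm_group (cochain_grp V E n :: (('v \<times> 'v) set \<Rightarrow> 'r::comm_ring_1) monoid)"
proof (rule comm_groupI)
  fix x y z :: "('v \<times> 'v) set \<Rightarrow> 'r"
  assume xyz: "x \<in> carrier (cochain_grp V E n)" "y \<in> carrier (cochain_grp V E n)"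
    "z \<in> carrier (cochain_grp V E n)"
  show "x \<otimes>\<^bsub>cochain_grp V E n\<^esub> y \<in> carrier (cochain_grp V E n)"
    using xyz(1,2) cochains_add by (simp add: cochain_grp_def)
  show "x \<otimes>\<^bsub>cochain_grp V E n\<^esub> y \<otimes>\<^bsub>cochain_grp V E n\<^esub> z
      = x \<otimes>\<^bsub>cochain_grp V E n\<^esub> (y \<otimes>\<^bsub>cochain_grp V E n\<^esub> z)"
    by (simp add: cochain_grp_def add.assoc)
  show "x \<otimes>\<^bsub>cochain_grp V E n\<^esub> y = y \<otimes>\<^bsub>cochain_grp V E n\<^esub> x"
    by (simp add: cochain_grp_def add.commute)
  show "\<one>\<^bsub>cochain_grp V E n\<^esub> \<otimes>\<^bsub>cochain_grp V E n\<^esub> x = x"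
    by (simp add: cochain_grp_def)
  have "(\<lambda>H. - x H) \<in> cochains V E n"
    using xyz(1) by (simp add: cochain_grp_def cochains_def)
  then show "\<exists>y \<in> carrier (cochain_grp V E n). y \<otimes>\<^bsub>cochain_grp V E n\<^esub> x = \<one>\<^bsub>cochain_grp V E n\<^esub>"
    by (intro bexI[of _ "\<lambda>H. - x H"]) (simp_all add: cochain_grp_def)
qed (simp add: cochain_grp_def cochains_def)

lemma group_cochain_grp: "group (cochain_grp V E n)"
  using comm_group_cochain_grp unfolding comm_group_def by blast

lemma dmap_hom: "dmap V E n \<in> hom (cochain_grp V E n) (cochain_grp V E (Suc n))"
  by (rule homI) (auto simp: cochain_grp_def cochains_def dmap_def sum.distrib distrib_left)

lemma pull_hom:
  assumes "ring_homomorphism f"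
  shows "pull V V' E' n \<phi> f \<in> hom (cochain_grp V E n) (cochain_grp V' E' n)"
proof (rule homI)
  fix x y
  show "pull V V' E' n \<phi> f (x \<otimes>\<^bsub>cochain_grp V E n\<^esub> y)
      = pull V V' E' n \<phi> f x \<otimes>\<^bsub>cochain_grp V' E' n\<^esub> pull V V' E' n \<phi> f y"
    using additive.add[OF ring_homomorphism_additive[OF assms]]
    by (auto simp: cochain_grp_def pull_def distrib_left)
qed (simp add: cochain_grp_def pull_in_cochains)

lemma dmap_group_hom: "group_hom (cochain_grp V E n) (cochain_grp V E (Suc n)) (dmap V E n)"
  unfolding group_hom_def group_hom_axioms_def using group_cochain_grp dmap_hom by blast

lemma subgroup_cocycles: "subgroup (cocycles V E n) (cochain_grp V E n)"
proof -
  have kernel: "cocycles V E n = kernel (cochain_grp V E n) (cochain_grp V E (Suc n)) (dmap V E n)"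
    by (simp add: cocycles_def kernel_def cochain_grp_def)
  show ?thesis
    unfolding kernel by (rule group_hom.subgroup_kernel[OF dmap_group_hom])
qed

lemma subgroup_coboundaries: "subgroup (coboundaries V E n) (cochain_grp V E n)"
proof (cases n)
  case 0
  then show ?thesis
    using group.triv_subgroup[OF group_cochain_grp] by (simp add: cochain_grp_def)
next
  case (Suc m)
  then show ?thesis
    using group_hom.img_is_subgroup[OF dmap_group_hom] by (simp add: cochain_grp_def)
qed

lemma normal_coboundaries: "normal (coboundaries V E n) (cochain_grp V E n)"
  by (rule comm_group.subgroup_imp_normal[OF comm_group_cochain_grp subgroup_coboundaries])

lemma cocycles_subset_cochains: "cocycles V E n \<subseteq> cochains V E n"
  by (auto simp: cocycles_def)

lemma pull_coboundaries:
  assumes "digraph V E" "digraph V' E'" "regular_morphism V' E' V E \<phi>" "ring_homomorphism f"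
    and "b \<in> coboundaries V E n"
  shows "pull V V' E' n \<phi> f b \<in> coboundaries V' E' n"
proof (cases n)
  case 0
  then show ?thesis
    using assms(5) pull_zero[OF assms(4)] by simp
next
  case (Suc m)
  then obtain c where c: "c \<in> cochains V E m" "b = dmap V E m c"
    using assms(5) by auto
  then have "pull V V' E' n \<phi> f b = dmap V' E' m (pull V V' E' m \<phi> f c)"
    using pull_dmap[OF assms(1-4) c(1)] Suc by simp
  then show ?thesis
    using imageI[OF pull_in_cochains, of "dmap V' E' m"] Suc by simp
qed

lemma pull_cocycles:
  assumes "digraph V E" "digraph V' E'" "regular_morphism V' E' V E \<phi>" "ring_homomorphism f"
    and "x \<in> cocycles V E n"
  shows "pull V V' E' n \<phi> f x \<in> cocycles V' E' n"
proof -
  have x: "x \<in> cochains V E n" "dmap V E n x = (\<lambda>_. 0)"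
    using assms(5) by (auto simp: cocycles_def)
  have "dmap V' E' n (pull V V' E' n \<phi> f x) = pull V V' E' (Suc n) \<phi> f (dmap V E n x)"
    by (rule pull_dmap[OF assms(1-4) x(1), symmetric])
  also have "\<dots> = (\<lambda>_. 0)"
    unfolding x(2) by (rule pull_zero[OF assms(4)])
  finally show ?thesis
    by (simp add: cocycles_def pull_in_cochains)
qed

lemma mp_cohom_eq:
  "mp_cohom V E n = (cochain_grp V E n Mod coboundaries V E n)
     \<lparr>carrier := (\<lambda>x. coboundaries V E n #>\<^bsub>cochain_grp V E n\<^esub> x) ` cocycles V E n\<rparr>"
  unfolding mp_cohom_def FactGroup_def RCOSETS_def r_coset_def set_mult_def
  by (simp add: cochain_grp_def UNION_singleton_eq_range)

lemma carrier_mp_cohom: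
  "carrier (mp_cohom V E n) = (\<lambda>x. coboundaries V E n #>\<^bsub>cochain_grp V E n\<^esub> x) ` cocycles V E n"
  by (simp add: mp_cohom_eq)

lemma mult_mp_cohom: "P \<otimes>\<^bsub>mp_cohom V E n\<^esub> Q = P <#>\<^bsub>cochain_grp V E n\<^esub> Q"
  by (simp add: mp_cohom_eq FactGroup_def)

lemma comm_group_mp_cohom: "comm_group (mp_cohom V E n)"
proof -
  let ?G = "cochain_grp V E n" and ?B = "coboundaries V E n"
  interpret G: comm_group ?G
    by (rule comm_group_cochain_grp)
  have "group_hom ?G (?G Mod ?B) (\<lambda>x. ?B #>\<^bsub>?G\<^esub> x)"
    unfolding group_hom_def group_hom_axioms_def
    using normal.factorgroup_is_group[OF normal_coboundaries] normal.r_coset_hom_Mod[OF normal_coboundaries]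
      G.is_group by blast
  then have "subgroup ((\<lambda>x. ?B #>\<^bsub>?G\<^esub> x) ` cocycles V E n) (?G Mod ?B)"
    by (rule group_hom.subgroup_img_is_subgroup[OF _ subgroup_cocycles])
  then show ?thesis
    unfolding mp_cohom_eq by (rule comm_group_restrict[OF G.abelian_FactGroup[OF subgroup_coboundaries]])
qed

lemma cohom_map_rcoset:
  fixes x :: "('v::linorder \<times> 'v) set \<Rightarrow> 'r::comm_ring_1" and f :: "'r \<Rightarrow> 's::comm_ring_1"
    and \<phi> :: "'w::linorder \<Rightarrow> 'v"
  assumes "digraph V E" "digraph V' E'" "regular_morphism V' E' V E \<phi>" "ring_homomorphism f"
    and "x \<in> cochains V E n"
  shows "cohom_map V V' E' n \<phi> f (coboundaries V E n #>\<^bsub>cochain_grp V E n\<^esub> x)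
    = coboundaries V' E' n #>\<^bsub>cochain_grp V' E' n\<^esub> pull V V' E' n \<phi> f x"
proof -
  let ?G = "cochain_grp V E n :: (('v \<times> 'v) set \<Rightarrow> 'r) monoid"
    and ?G' = "cochain_grp V' E' n :: (('w \<times> 'w) set \<Rightarrow> 's) monoid"
  let ?B = "coboundaries V E n :: (('v \<times> 'v) set \<Rightarrow> 'r) set"
    and ?B' = "coboundaries V' E' n :: (('w \<times> 'w) set \<Rightarrow> 's) set" and ?p = "pull V V' E' n \<phi> f"
  have absorb: "?B' #>\<^bsub>?G'\<^esub> ?p (b \<otimes>\<^bsub>?G\<^esub> x) = ?B' #>\<^bsub>?G'\<^esub> ?p x" if "b \<in> ?B" for b
  proof -
    have B'_subset: "?B' \<subseteq> carrier ?G'"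
      by (rule subgroup.subset[OF subgroup_coboundaries])
    have "b \<in> carrier ?G"
      using subgroup.subset[OF subgroup_coboundaries] that by blast
    then have "?p (b \<otimes>\<^bsub>?G\<^esub> x) = ?p b \<otimes>\<^bsub>?G'\<^esub> ?p x"
      using hom_mult[OF pull_hom[OF assms(4)]] assms(5) by (simp add: cochain_grp_def)
    moreover have "?p b \<in> ?B'"
      by (rule pull_coboundaries[OF assms(1-4) that])
    moreover have "?p b \<in> carrier ?G'" "?p x \<in> carrier ?G'"
      by (simp_all add: cochain_grp_def pull_in_cochains)
    ultimately show ?thesis
      using group.coset_mult_assoc[OF group_cochain_grp B'_subset, of "?p b" "?p x"]
        subgroup.rcos_const[OF subgroup_coboundaries group_cochain_grp, of "?p b"]
      by simp
  qed
  have "?B #>\<^bsub>?G\<^esub> x = (\<lambda>b. b \<otimes>\<^bsub>?G\<^esub> x) ` ?B"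
    by (auto simp: r_coset_def)
  then have "cohom_map V V' E' n \<phi> f (?B #>\<^bsub>?G\<^esub> x) = (\<Union>b\<in>?B. ?B' #>\<^bsub>?G'\<^esub> ?p (b \<otimes>\<^bsub>?G\<^esub> x))"
    unfolding cohom_map_def by (simp add: image_image)
  also have "\<dots> = (\<Union>b\<in>?B. ?B' #>\<^bsub>?G'\<^esub> ?p x)"
    using absorb by simp
  also have "\<dots> = ?B' #>\<^bsub>?G'\<^esub> ?p x"
    using subgroup.one_closed[OF subgroup_coboundaries] by blast
  finally show ?thesis .
qed

lemma cohom_map_hom:
  fixes f :: "'r::comm_ring_1 \<Rightarrow> 's::comm_ring_1" and V :: "'v::linorder set" and V' :: "'w::linorder set"
  assumes "digraph V E" "digraph V' E'" "regular_morphism V' E' V E \<phi>" "ring_homomorphism f"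
  shows "cohom_map V V' E' n \<phi> f
    \<in> hom (mp_cohom V E n :: (('v \<times> 'v) set \<Rightarrow> 'r) set monoid) (mp_cohom V' E' n)"
proof (rule homI)
  let ?G = "cochain_grp V E n :: (('v \<times> 'v) set \<Rightarrow> 'r) monoid"
    and ?G' = "cochain_grp V' E' n :: (('w \<times> 'w) set \<Rightarrow> 's) monoid"
  let ?B = "coboundaries V E n :: (('v \<times> 'v) set \<Rightarrow> 'r) set"
    and ?B' = "coboundaries V' E' n :: (('w \<times> 'w) set \<Rightarrow> 's) set" and ?p = "pull V V' E' n \<phi> f"
  fix P Q
  assume "P \<in> carrier (mp_cohom V E n :: (('v \<times> 'v) set \<Rightarrow> 'r) set monoid)"
  then obtain x where x: "x \<in> cocycles V E n" "P = ?B #>\<^bsub>?G\<^esub> x"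
    unfolding carrier_mp_cohom by blast
  then show "cohom_map V V' E' n \<phi> f P \<in> carrier (mp_cohom V' E' n)"
    using cohom_map_rcoset[OF assms] pull_cocycles[OF assms] cocycles_subset_cochains
    unfolding carrier_mp_cohom by blast
  assume "Q \<in> carrier (mp_cohom V E n :: (('v \<times> 'v) set \<Rightarrow> 'r) set monoid)"
  then obtain y where y: "y \<in> cocycles V E n" "Q = ?B #>\<^bsub>?G\<^esub> y"
    unfolding carrier_mp_cohom by blast
  have cochains: "x \<in> cochains V E n" "y \<in> cochains V E n"
    using x(1) y(1) cocycles_subset_cochains by auto
  then have carrier: "x \<in> carrier ?G" "y \<in> carrier ?G" "?p x \<in> carrier ?G'" "?p y \<in> carrier ?G'"
    by (simp_all add: cochain_grp_def pull_in_cochains)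
  have "x \<otimes>\<^bsub>?G\<^esub> y \<in> cochains V E n"
    using cochains by (simp add: cochain_grp_def cochains_add)
  then have "cohom_map V V' E' n \<phi> f (P \<otimes>\<^bsub>mp_cohom V E n\<^esub> Q) = ?B' #>\<^bsub>?G'\<^esub> ?p (x \<otimes>\<^bsub>?G\<^esub> y)"
    unfolding mult_mp_cohom x(2) y(2) normal.rcos_sum[OF normal_coboundaries carrier(1,2)]
    by (rule cohom_map_rcoset[OF assms])
  also have "\<dots> = ?B' #>\<^bsub>?G'\<^esub> (?p x \<otimes>\<^bsub>?G'\<^esub> ?p y)"
    using hom_mult[OF pull_hom[OF assms(4), of V V' E' n \<phi>] carrier(1,2)] by simp
  also have "\<dots> = cohom_map V V' E' n \<phi> f P \<otimes>\<^bsub>mp_cohom V' E' n\<^esub> cohom_map V V' E' n \<phi> f Q"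
    unfolding mult_mp_cohom x(2) y(2) cohom_map_rcoset[OF assms cochains(1)] cohom_map_rcoset[OF assms cochains(2)]
    by (rule normal.rcos_sum[OF normal_coboundaries carrier(3,4), symmetric])
  finally show "cohom_map V V' E' n \<phi> f (P \<otimes>\<^bsub>mp_cohom V E n\<^esub> Q)
      = cohom_map V V' E' n \<phi> f P \<otimes>\<^bsub>mp_cohom V' E' n\<^esub> cohom_map V V' E' n \<phi> f Q" .
qed

theorem theorem1p3:
  fixes V1 :: "'a::linorder set" and E1 :: "('a \<times> 'a) set"
    and V2 :: "'b::linorder set" and E2 :: "('b \<times> 'b) set"
    and V3 :: "'c::linorder set" and E3 :: "('c \<times> 'c) set"
    and \<phi> :: "'b \<Rightarrow> 'a" and \<psi> :: "'c \<Rightarrow> 'b"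
    and f :: "'r::comm_ring_1 \<Rightarrow> 's::comm_ring_1" and g :: "'s \<Rightarrow> 't::comm_ring_1"
    and n :: nat
  assumes "digraph V1 E1" and "digraph V2 E2" and "digraph V3 E3"
    and "regular_morphism V2 E2 V1 E1 \<phi>" and "regular_morphism V3 E3 V2 E2 \<psi>"
    and "ring_homomorphism f" and "ring_homomorphism g"
  shows "comm_group (mp_cohom V1 E1 n :: (('a \<times> 'a) set \<Rightarrow> 'r) set monoid) \<and>
         cohom_map V1 V2 E2 n \<phi> f
           \<in> hom (mp_cohom V1 E1 n :: (('a \<times> 'a) set \<Rightarrow> 'r) set monoid) (mp_cohom V2 E2 n) \<and>
         (\<forall>cl \<in> carrier (mp_cohom V1 E1 n :: (('a \<times> 'a) set \<Rightarrow> 'r) set monoid).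
           cohom_map V1 V1 E1 n id id cl = cl) \<and>
         (\<forall>cl \<in> carrier (mp_cohom V1 E1 n :: (('a \<times> 'a) set \<Rightarrow> 'r) set monoid).
           cohom_map V2 V3 E3 n \<psi> g (cohom_map V1 V2 E2 n \<phi> f cl)
             = cohom_map V1 V3 E3 n (\<phi> \<circ> \<psi>) (g \<circ> f) cl)"
proof (intro conjI ballI)
  show "comm_group (mp_cohom V1 E1 n :: (('a \<times> 'a) set \<Rightarrow> 'r) set monoid)"
    by (rule comm_group_mp_cohom)
  show "cohom_map V1 V2 E2 n \<phi> f \<in> hom (mp_cohom V1 E1 n) (mp_cohom V2 E2 n)"
    by (rule cohom_map_hom[OF assms(1,2,4,6)])
next
  fix cl assume "cl \<in> carrier (mp_cohom V1 E1 n :: (('a \<times> 'a) set \<Rightarrow> 'r) set monoid)"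
  then obtain x :: "('a \<times> 'a) set \<Rightarrow> 'r" where x: "x \<in> cochains V1 E1 n"
      "cl = coboundaries V1 E1 n #>\<^bsub>cochain_grp V1 E1 n\<^esub> x"
    unfolding carrier_mp_cohom using cocycles_subset_cochains by blast
  show "cohom_map V1 V1 E1 n id id cl = cl"
    unfolding x(2) cohom_map_rcoset[OF assms(1,1) regular_morphism_id ring_homomorphism_id x(1)]
    by (simp add: pull_id[OF x(1)])
  show "cohom_map V2 V3 E3 n \<psi> g (cohom_map V1 V2 E2 n \<phi> f cl)
      = cohom_map V1 V3 E3 n (\<phi> \<circ> \<psi>) (g \<circ> f) cl"
    unfolding x(2) cohom_map_rcoset[OF assms(1,2,4,6) x(1)]
      cohom_map_rcoset[OF assms(2,3,5,7) pull_in_cochains]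
      cohom_map_rcoset[OF assms(1,3) regular_morphism_comp[OF assms(4,5)]
        ring_homomorphism_comp[OF assms(6,7)] x(1)]
      pull_comp[OF assms(1-5,7)] ..
qed

end
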